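(* Every tree of diameter $5$ is odd-graceful.
   Context: A graph $G$ with $n$ edges is odd-graceful if there is an injective map $f:V(G)\to\{0,1,2,\dots,2n-1\}$ such that the set of induced edge weights $\{|f(x)-f(y)| : xy\in E(G)\}$ equals $\{1,3,5,\dots,2n-1\}$. *)

theory Defs
  imports Main
begin

definition simple_graph :: "'a set \<Rightarrow> 'a set set \<Rightarrow> bool" where
  "simple_graph V E \<longleftrightarrow> finite V \<and> (\<forall>e\<in>E. e \<subseteq> V \<and> card e = 2)"

definition is_walk :: "'a set \<Rightarrow> 'a set set \<Rightarrow> 'a list \<Rightarrow> bool" where
  "is_walk V E xs \<longleftrightarrow> xs \<noteq> [] \<and> set xs \<subseteq> V \<and>
     (\<forall>i. Suc i < length xs \<longrightarrow> {xs ! i, xs ! Suc i} \<in> E)"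

definition connected_graph :: "'a set \<Rightarrow> 'a set set \<Rightarrow> bool" where
  "connected_graph V E \<longleftrightarrow> V \<noteq> {} \<and>
     (\<forall>u\<in>V. \<forall>v\<in>V. \<exists>xs. is_walk V E xs \<and> hd xs = u \<and> last xs = v)"

definition is_cycle :: "'a set \<Rightarrow> 'a set set \<Rightarrow> 'a list \<Rightarrow> bool" where
  "is_cycle V E xs \<longleftrightarrow> length xs \<ge> 3 \<and> distinct xs \<and> is_walk V E xs \<and>
     {last xs, hd xs} \<in> E"

definition acyclic_graph :: "'a set \<Rightarrow> 'a set set \<Rightarrow> bool" where
  "acyclic_graph V E \<longleftrightarrow> \<not> (\<exists>xs. is_cycle V E xs)"

definition is_tree :: "'a set \<Rightarrow> 'a set set \<Rightarrow> bool" where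
  "is_tree V E \<longleftrightarrow> simple_graph V E \<and> connected_graph V E \<and> acyclic_graph V E"

definition graph_dist :: "'a set \<Rightarrow> 'a set set \<Rightarrow> 'a \<Rightarrow> 'a \<Rightarrow> nat" where
  "graph_dist V E u v = (LEAST n. \<exists>xs. is_walk V E xs \<and> hd xs = u \<and> last xs = v
                                       \<and> length xs = Suc n)"

definition diameter :: "'a set \<Rightarrow> 'a set set \<Rightarrow> nat" where
  "diameter V E = Max {graph_dist V E u v | u v. u \<in> V \<and> v \<in> V}"

definition odd_graceful :: "'a set \<Rightarrow> 'a set set \<Rightarrow> bool" where
  "odd_graceful V E \<longleftrightarrow>
     (\<exists>f :: 'a \<Rightarrow> nat. inj_on f V \<and> f ` V \<subseteq> {0 ..< 2 * card E} \<and>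
        {nat \<bar>int (f x) - int (f y)\<bar> | x y. {x, y} \<in> E}
          = {2 * k + 1 | k. k < card E})"

end

theory Submission
  imports Defs "HOL-Library.Product_Lexorder"
begin

text \<open>Root the tree at a central vertex of a path P!0 \<dots> P!5 realising the diameter, say at
  P!2. Then every vertex has depth at most 3, and every vertex of depth 3 lies below the
  neighbour b = P!3 of the root. Rank the vertices by depth, refined within each level by a
  suitable order, and give the edge from v to its parent the weight 2n + 1 - 2 rank v if v has
  depth 1 and 2 rank v - 2 d1 - 1 otherwise, where d1 is the number of vertices of
  depth 1; these weights are exactly the odd numbers below 2n. Labelling each vertex by the
  alternating sum of the weights on its path to the root realises every weight as the label
  difference of its edge. Labels at depths 1 and 3 are odd and at depth 2 even, within a level
  they are strictly monotone in the rank, and their ranges separate depth 1 from depth 3. The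
  labels at depth 3 stay positive provided b has at most one more non-leaf child than the
  root has besides b, and one of the two roots P!2, P!3 of the central edge satisfies this.\<close>

lemma simple_graph_edgeD:
  assumes "simple_graph V E" "{x, y} \<in> E"
  shows "x \<in> V" "y \<in> V" "x \<noteq> y"
  using assms unfolding simple_graph_def by fastforce+

subsection \<open>Walks and distance\<close>

lemma is_walk_singleton: "x \<in> V \<Longrightarrow> is_walk V E [x]"
  by (simp add: is_walk_def)

lemma is_walk_edge: "is_walk V E xs \<Longrightarrow> Suc i < length xs \<Longrightarrow> {xs ! i, xs ! Suc i} \<in> E"
  by (simp add: is_walk_def)

lemma is_walk_rev:
  assumes "is_walk V E xs" shows "is_walk V E (rev xs)"
  unfolding is_walk_def
proof (intro conjI allI impI)
  show "rev xs \<noteq> []" "set (rev xs) \<subseteq> V" using assms by (auto simp: is_walk_def)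
  fix i assume i: "Suc i < length (rev xs)"
  define j where "j = length xs - Suc (Suc i)"
  have j: "Suc j < length xs" using i by (simp add: j_def)
  have "rev xs ! i = xs ! Suc j" "rev xs ! Suc i = xs ! j"
    using i by (auto simp: rev_nth j_def Suc_diff_Suc)
  moreover have "{xs ! j, xs ! Suc j} \<in> E" using assms j by (auto simp: is_walk_def)
  ultimately show "{rev xs ! i, rev xs ! Suc i} \<in> E" by (simp add: insert_commute)
qed

lemma is_walk_snoc:
  assumes "is_walk V E xs" "y \<in> V" "{last xs, y} \<in> E"
  shows "is_walk V E (xs @ [y])"
  unfolding is_walk_def
proof (intro conjI allI impI)
  show "xs @ [y] \<noteq> []" "set (xs @ [y]) \<subseteq> V" using assms by (auto simp: is_walk_def)
  fix i assume i: "Suc i < length (xs @ [y])"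
  have ne: "xs \<noteq> []" using assms by (simp add: is_walk_def)
  show "{(xs @ [y]) ! i, (xs @ [y]) ! Suc i} \<in> E"
  proof (cases "Suc i < length xs")
    case True then show ?thesis using assms by (auto simp: is_walk_def nth_append)
  next
    case False
    then have "i = length xs - 1" using i by simp
    then show ?thesis using assms ne by (auto simp: nth_append last_conv_nth)
  qed
qed

lemma is_walk_Cons:
  assumes "is_walk V E xs" "x \<in> V" "{x, hd xs} \<in> E"
  shows "is_walk V E (x # xs)"
  unfolding is_walk_def
proof (intro conjI allI impI)
  show "x # xs \<noteq> []" "set (x # xs) \<subseteq> V" using assms by (auto simp: is_walk_def)
  fix i assume i: "Suc i < length (x # xs)"
  have "xs \<noteq> []" using assms by (simp add: is_walk_def)
  then show "{(x # xs) ! i, (x # xs) ! Suc i} \<in> E"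
    using assms i by (cases i) (auto simp: is_walk_def hd_conv_nth)
qed

lemma is_walk_take: "is_walk V E xs \<Longrightarrow> 0 < k \<Longrightarrow> is_walk V E (take k xs)"
  unfolding is_walk_def by (auto dest: in_set_takeD)

lemma is_walk_drop: "is_walk V E xs \<Longrightarrow> k < length xs \<Longrightarrow> is_walk V E (drop k xs)"
  unfolding is_walk_def by (auto dest: in_set_dropD)

lemma is_walk_append:
  assumes "is_walk V E xs" "is_walk V E ys" "last xs = hd ys"
  shows "is_walk V E (xs @ tl ys)"
  using assms(2,3)
proof (induction ys rule: rev_induct)
  case Nil then show ?case by (simp add: is_walk_def)
next
  case (snoc y ys)
  show ?case
  proof (cases "ys = []")
    case True then show ?thesis using assms(1) by simp
  next
    case False
    have ys: "is_walk V E ys"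
      using is_walk_take[OF snoc.prems(1), of "length ys"] False by simp
    have "last xs = hd ys" using snoc.prems(2) False by simp
    then have "is_walk V E (xs @ tl ys)" and "last (xs @ tl ys) = last ys"
      using snoc.IH[OF ys] False assms(1) by (cases ys; auto simp: is_walk_def)+
    moreover have "{last ys, y} \<in> E" "y \<in> V"
      using snoc.prems(1) False unfolding is_walk_def
      by (auto simp: last_conv_nth nth_append elim!: allE[where x="length ys - 1"])
    ultimately show ?thesis using is_walk_snoc False by fastforce
  qed
qed

lemma graph_dist_le:
  assumes "is_walk V E xs" "hd xs = u" "last xs = v"
  shows "graph_dist V E u v \<le> length xs - 1"
  unfolding graph_dist_def
proof (rule Least_le)
  show "\<exists>ys. is_walk V E ys \<and> hd ys = u \<and> last ys = v \<and> length ys = Suc (length xs - 1)"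
    using assms by (intro exI[of _ xs]) (auto simp: is_walk_def)
qed

lemma shortest_walk:
  assumes "connected_graph V E" "u \<in> V" "v \<in> V"
  obtains xs where "is_walk V E xs" "hd xs = u" "last xs = v"
    "length xs = Suc (graph_dist V E u v)"
proof -
  obtain xs where xs: "is_walk V E xs" "hd xs = u" "last xs = v"
    using assms unfolding connected_graph_def by blast
  then have "\<exists>n ys. is_walk V E ys \<and> hd ys = u \<and> last ys = v \<and> length ys = Suc n"
    by (intro exI[of _ "length xs - 1"] exI[of _ xs]) (auto simp: is_walk_def)
  then have "\<exists>ys. is_walk V E ys \<and> hd ys = u \<and> last ys = v \<and> length ys = Suc (graph_dist V E u v)"
    unfolding graph_dist_def by (rule LeastI_ex)
  then show ?thesis using that by blast
qed

lemma graph_dist_self: "u \<in> V \<Longrightarrow> graph_dist V E u u = 0"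
  using graph_dist_le[of V E "[u]" u u] by (simp add: is_walk_def)

lemma graph_dist_eq_0:
  assumes "connected_graph V E" "u \<in> V" "v \<in> V" "graph_dist V E u v = 0"
  shows "u = v"
  using assms by (metis shortest_walk last_ConsL length_0_conv length_Suc_conv list.sel(1))

lemma graph_dist_commute:
  assumes "connected_graph V E" "u \<in> V" "v \<in> V"
  shows "graph_dist V E u v = graph_dist V E v u"
proof -
  have "graph_dist V E v u \<le> graph_dist V E u v" if uv: "u \<in> V" "v \<in> V" for u v
  proof -
    obtain xs where xs: "is_walk V E xs" "hd xs = u" "last xs = v"
      "length xs = Suc (graph_dist V E u v)"
      using shortest_walk[OF assms(1) uv] .
    then have "xs \<noteq> []" by (simp add: is_walk_def)
    then show ?thesis
      using graph_dist_le[OF is_walk_rev[OF xs(1)]] xs by (simp add: hd_rev last_rev)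
  qed
  then show ?thesis using assms by (meson antisym)
qed

lemma graph_dist_triangle:
  assumes "connected_graph V E" "u \<in> V" "v \<in> V" "w \<in> V"
  shows "graph_dist V E u w \<le> graph_dist V E u v + graph_dist V E v w"
proof -
  obtain xs where xs: "is_walk V E xs" "hd xs = u" "last xs = v"
    "length xs = Suc (graph_dist V E u v)"
    using shortest_walk[OF assms(1,2,3)] .
  obtain ys where ys: "is_walk V E ys" "hd ys = v" "last ys = w"
    "length ys = Suc (graph_dist V E v w)"
    using shortest_walk[OF assms(1,3,4)] .
  have "xs \<noteq> []" "ys \<noteq> []" using xs ys by (auto simp: is_walk_def)
  moreover have "hd (xs @ tl ys) = u" "last (xs @ tl ys) = w"
    using xs ys by (cases ys; auto simp: is_walk_def)+
  ultimately show ?thesis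
    using graph_dist_le[OF is_walk_append[OF xs(1) ys(1)]] xs ys by simp
qed

lemma graph_dist_edge:
  assumes "connected_graph V E" "u \<in> V" "x \<in> V" "y \<in> V" "{x, y} \<in> E"
  shows "graph_dist V E u y \<le> graph_dist V E u x + 1"
proof -
  obtain xs where xs: "is_walk V E xs" "hd xs = u" "last xs = x"
    "length xs = Suc (graph_dist V E u x)"
    using shortest_walk[OF assms(1,2,3)] .
  then have "xs \<noteq> []" by (auto simp: is_walk_def)
  then show ?thesis
    using graph_dist_le[OF is_walk_snoc[OF xs(1) assms(4)]] xs assms by simp
qed

lemma graph_dist_le_diameter:
  assumes "finite V" "u \<in> V" "v \<in> V"
  shows "graph_dist V E u v \<le> diameter V E"
  unfolding diameter_def using assms
  by (intro Max_ge) (auto intro: finite_subset[of _ "(\<lambda>(u, v). graph_dist V E u v) ` (V \<times> V)"])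

lemma diameter_attained:
  assumes "finite V" "V \<noteq> {}"
  obtains u v where "u \<in> V" "v \<in> V" "graph_dist V E u v = diameter V E"
proof -
  let ?S = "{graph_dist V E u v | u v. u \<in> V \<and> v \<in> V}"
  obtain x where "x \<in> V" using assms(2) by blast
  then have "?S \<noteq> {}" by blast
  moreover have "?S = (\<lambda>(u, v). graph_dist V E u v) ` (V \<times> V)" by auto
  then have "finite ?S" using assms(1) by simp
  ultimately have "Max ?S \<in> ?S" by (rule Max_in[rotated])
  then obtain u v where "u \<in> V" "v \<in> V" "Max ?S = graph_dist V E u v" by blast
  then show ?thesis using that by (simp add: diameter_def)
qed

lemma diametral_path:
  assumes "connected_graph V E" "finite V"
  obtains P where "is_walk V E P" "length P = Suc (diameter V E)"
    "graph_dist V E (P ! 0) (P ! diameter V E) = diameter V E"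
proof -
  obtain u v where uv: "u \<in> V" "v \<in> V" "graph_dist V E u v = diameter V E"
    using diameter_attained assms by (metis connected_graph_def)
  obtain P where P: "is_walk V E P" "hd P = u" "last P = v" "length P = Suc (diameter V E)"
    using shortest_walk[OF assms(1) uv(1,2)] uv(3) by metis
  then have "P \<noteq> []" by auto
  then have "P ! 0 = u" "P ! diameter V E = v" using P(2-4) by (simp_all add: hd_conv_nth last_conv_nth)
  then show ?thesis using that P uv(3) by simp
qed

subsection \<open>Trees rooted at a vertex\<close>

definition internal_neighbours :: "'a set \<Rightarrow> 'a set set \<Rightarrow> 'a \<Rightarrow> 'a \<Rightarrow> 'a set" where
  "internal_neighbours V E r s = {x\<in>V. {r, x} \<in> E \<and> x \<noteq> s \<and> (\<exists>c\<in>V. {x, c} \<in> E \<and> c \<noteq> r)}"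

locale rooted_tree =
  fixes V :: "'a set" and E :: "'a set set" and root :: 'a
  assumes tree: "is_tree V E" and root_in_V: "root \<in> V"
begin

lemma simple: "simple_graph V E" and connected: "connected_graph V E"
  and acyclic: "acyclic_graph V E"
  using tree by (auto simp: is_tree_def)

lemma finite_V: "finite V"
  using simple by (simp add: simple_graph_def)

lemma edge_in_V: "{x, y} \<in> E \<Longrightarrow> x \<in> V \<and> y \<in> V"
  using simple_graph_edgeD[OF simple] by blast

lemma walk_in_V: "is_walk V E xs \<Longrightarrow> x \<in> set xs \<Longrightarrow> x \<in> V"
  by (auto simp: is_walk_def)

definition depth :: "'a \<Rightarrow> nat" where "depth v = graph_dist V E root v"

lemma depth_root [simp]: "depth root = 0"
  by (simp add: depth_def graph_dist_self[OF root_in_V])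

lemma depth_eq_0: "v \<in> V \<Longrightarrow> depth v = 0 \<Longrightarrow> v = root"
  unfolding depth_def using graph_dist_eq_0[OF connected root_in_V] by blast

lemma depth_edge_le: "{x, y} \<in> E \<Longrightarrow> depth y \<le> depth x + 1"
  using graph_dist_edge[OF connected root_in_V] edge_in_V by (simp add: depth_def)

lemma depth_eq_graph_dist: "v \<in> V \<Longrightarrow> graph_dist V E v root = depth v"
  using graph_dist_commute[OF connected _ root_in_V] by (simp add: depth_def)

lemma parent_exists:
  assumes v: "v \<in> V" "v \<noteq> root"
  shows "\<exists>u\<in>V. {u, v} \<in> E \<and> depth u + 1 = depth v"
proof -
  obtain xs where xs: "is_walk V E xs" "hd xs = root" "last xs = v"
    "length xs = Suc (depth v)"
    using shortest_walk[OF connected root_in_V v(1)] unfolding depth_def .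
  have k: "depth v \<noteq> 0" using depth_eq_0 v by auto
  define u where "u = xs ! (depth v - 1)"
  have "xs ! Suc (depth v - 1) = v"
    using xs k last_conv_nth[of xs] by (auto simp: is_walk_def)
  then have e: "{u, v} \<in> E"
    using is_walk_edge[OF xs(1), of "depth v - 1"] xs(4) k by (simp add: u_def)
  have "take (depth v) xs \<noteq> []" using xs k by (auto simp: is_walk_def)
  then have "last (take (depth v) xs) = u"
    using xs by (simp add: last_conv_nth u_def)
  moreover have "hd (take (depth v) xs) = root" using xs k by (cases xs) auto
  moreover have "0 < depth v" using k by simp
  ultimately have "depth u \<le> length (take (depth v) xs) - 1"
    unfolding depth_def by (metis graph_dist_le is_walk_take xs(1))
  then have "depth u \<le> depth v - 1" using xs by simp
  moreover have "depth v \<le> depth u + 1" using depth_edge_le e by blast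
  ultimately show ?thesis using edge_in_V e k by (intro bexI[of _ u]) auto
qed

text \<open>The acyclicity argument: a path between two distinct vertices of depth k that never
  drops below depth k could be closed into a cycle through their parents (if these coincide),
  or extended by them to a path one level lower.\<close>

lemma no_path_above_depth:
  assumes "is_walk V E Q" "distinct Q" "hd Q \<noteq> last Q"
    "depth (hd Q) = k" "depth (last Q) = k" "\<forall>z\<in>set Q. k \<le> depth z"
  shows False
  using assms
proof (induction k arbitrary: Q)
  case 0
  then have "Q \<noteq> []" by (simp add: is_walk_def)
  then show False using 0 depth_eq_0 walk_in_V[OF 0(1)] by (metis hd_in_set last_in_set)
next
  case (Suc j)
  have ne: "Q \<noteq> []" using Suc by (simp add: is_walk_def)
  define p1 p2 where "p1 = hd Q" and "p2 = last Q"
  have pV: "p1 \<in> V" "p2 \<in> V" using walk_in_V[OF Suc.prems(1)] ne by (auto simp: p1_def p2_def)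
  have dp: "depth p1 = Suc j" "depth p2 = Suc j" using Suc.prems(4,5) by (simp_all add: p1_def p2_def)
  then have "p1 \<noteq> root" "p2 \<noteq> root" by (metis depth_root nat.distinct(1))+
  then obtain q1 q2 where q1: "q1 \<in> V" "{q1, p1} \<in> E" "depth q1 + 1 = depth p1"
    and q2: "q2 \<in> V" "{q2, p2} \<in> E" "depth q2 + 1 = depth p2"
    using parent_exists pV by meson
  then have dq: "depth q1 = j" "depth q2 = j" using dp by simp_all
  have q_notin: "q1 \<notin> set Q" "q2 \<notin> set Q"
    using Suc.prems(6) dq by (metis Suc_n_not_le_n)+
  show False
  proof (cases "q1 = q2")
    case True
    have "length Q \<noteq> 1" using Suc.prems(3) by (cases Q) auto
    then have "2 \<le> length Q" using ne by (cases Q) (auto simp: Suc_le_eq)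
    then have "is_cycle V E (q1 # Q)"
      using Suc.prems(1-3) q_notin ne q1 q2 True is_walk_Cons[OF Suc.prems(1) q1(1)]
      unfolding is_cycle_def p1_def p2_def
      by (auto simp: insert_commute)
    then show False using acyclic by (auto simp: acyclic_graph_def)
  next
    case False
    have "is_walk V E (Q @ [q2])"
      using is_walk_snoc[OF Suc.prems(1) q2(1)] q2 by (simp add: p2_def insert_commute)
    then have "is_walk V E (q1 # Q @ [q2])"
      using is_walk_Cons[OF _ q1(1)] q1 ne by (simp add: p1_def)
    moreover have "distinct (q1 # Q @ [q2])" using Suc.prems(2) q_notin False by auto
    moreover have "\<forall>z\<in>set (q1 # Q @ [q2]). j \<le> depth z" using Suc.prems(6) dq by auto
    ultimately show False using Suc.IH[of "q1 # Q @ [q2]"] dq False by simp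
  qed
qed

lemma depth_edge_neq:
  assumes "{x, y} \<in> E" shows "depth x \<noteq> depth y"
proof
  assume "depth x = depth y"
  moreover have "x \<noteq> y" "x \<in> V" "y \<in> V" using simple_graph_edgeD[OF simple assms] by auto
  moreover have "is_walk V E [x, y]"
    using is_walk_Cons[OF is_walk_singleton] assms calculation by simp
  ultimately show False by (intro no_path_above_depth[of "[x, y]" "depth x"]) auto
qed

lemma parent_unique:
  assumes "{u1, v} \<in> E" "{u2, v} \<in> E" "depth u1 + 1 = depth v" "depth u2 + 1 = depth v"
  shows "u1 = u2"
proof (rule ccontr)
  assume ne: "u1 \<noteq> u2"
  have V: "u1 \<in> V" "u2 \<in> V" "v \<in> V" using assms edge_in_V by blast+
  have "is_walk V E [v, u2]"
    using is_walk_Cons[OF is_walk_singleton[OF V(2)] V(3)] assms(2) by (simp add: insert_commute)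
  then have "is_walk V E [u1, v, u2]" using is_walk_Cons V assms(1) by fastforce
  then show False
    using ne assms by (intro no_path_above_depth[of "[u1, v, u2]" "depth u1"]) auto
qed

definition parent :: "'a \<Rightarrow> 'a" where
  "parent v = (SOME u. u \<in> V \<and> {u, v} \<in> E \<and> depth u + 1 = depth v)"

lemma parent:
  assumes "v \<in> V" "v \<noteq> root"
  shows "parent v \<in> V" "{parent v, v} \<in> E" "depth (parent v) + 1 = depth v"
  using someI_ex[OF parent_exists[OF assms, unfolded Bex_def]] unfolding parent_def by auto

lemma parent_eqI:
  assumes "{u, v} \<in> E" "depth u + 1 = depth v"
  shows "parent v = u"
proof -
  have "v \<in> V" "v \<noteq> root" using assms edge_in_V by auto
  then show ?thesis using parent_unique[OF parent(2) assms(1) parent(3)] assms(2) by auto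
qed

lemma edges_eq: "E = (\<lambda>v. {v, parent v}) ` (V - {root})"
proof
  show "(\<lambda>v. {v, parent v}) ` (V - {root}) \<subseteq> E"
    using parent(2) by (auto simp: insert_commute)
next
  show "E \<subseteq> (\<lambda>v. {v, parent v}) ` (V - {root})"
  proof
    fix e assume e: "e \<in> E"
    then have "card e = 2" using simple by (simp add: simple_graph_def)
    then obtain x y where xy: "e = {x, y}" by (auto simp: card_2_iff)
    have eE: "{x, y} \<in> E" "{y, x} \<in> E" using e xy by (auto simp: insert_commute)
    have V: "x \<in> V" "y \<in> V" using edge_in_V[OF eE(1)] by auto
    have "depth x + 1 = depth y \<or> depth y + 1 = depth x"
      using depth_edge_neq[OF eE(1)] depth_edge_le[OF eE(1)] depth_edge_le[OF eE(2)] by linarith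
    then show "e \<in> (\<lambda>v. {v, parent v}) ` (V - {root})"
    proof
      assume h: "depth x + 1 = depth y"
      then have "parent y = x" "y \<noteq> root" using parent_eqI eE by auto
      then show ?thesis using xy V by (auto simp: insert_commute intro!: image_eqI[of _ _ y])
    next
      assume h: "depth y + 1 = depth x"
      then have "parent x = y" "x \<noteq> root" using parent_eqI eE by auto
      then show ?thesis using xy V by (auto intro!: image_eqI[of _ _ x])
    qed
  qed
qed

lemma edge_iff_parent:
  "{x, y} \<in> E \<longleftrightarrow> (x \<in> V \<and> x \<noteq> root \<and> y = parent x) \<or> (y \<in> V \<and> y \<noteq> root \<and> x = parent y)"
  by (subst edges_eq) (auto simp: doubleton_eq_iff)

lemma depth_pos: "v \<in> V \<Longrightarrow> v \<noteq> root \<Longrightarrow> 1 \<le> depth v"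
  using depth_eq_0 by fastforce

lemma depth_parent: "v \<in> V \<Longrightarrow> v \<noteq> root \<Longrightarrow> depth (parent v) = depth v - 1"
  using parent(3) by fastforce

definition branch :: "'a \<Rightarrow> 'a" where "branch v = (parent ^^ (depth v - 1)) v"

lemma branch_parent:
  assumes "v \<in> V" "2 \<le> depth v" shows "branch (parent v) = branch v"
proof -
  have "v \<noteq> root" using assms by auto
  then have "branch (parent v) = (parent ^^ (depth v - 2)) (parent v)"
    by (simp add: branch_def depth_parent[OF assms(1)] numeral_2_eq_2)
  also have "\<dots> = (parent ^^ Suc (depth v - 2)) v"
    by (simp add: funpow_Suc_right del: funpow.simps)
  also have "Suc (depth v - 2) = depth v - 1" using assms by simp
  finally show ?thesis by (simp add: branch_def)
qed

lemma branch_edge: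
  assumes "{x, y} \<in> E" "x \<noteq> root" "y \<noteq> root"
  shows "branch x = branch y"
  using assms(1) unfolding edge_iff_parent
proof (elim disjE conjE)
  assume "x \<in> V" "x \<noteq> root" "y = parent x"
  moreover have "1 \<le> depth y" using calculation assms(3) parent(1) depth_pos by blast
  ultimately show ?thesis using branch_parent depth_parent by fastforce
next
  assume "y \<in> V" "y \<noteq> root" "x = parent y"
  moreover have "1 \<le> depth x" using calculation assms(2) parent(1) depth_pos by blast
  ultimately show ?thesis using branch_parent depth_parent by fastforce
qed

lemma branch_walk:
  assumes "is_walk V E xs" "root \<notin> set xs"
  shows "branch (hd xs) = branch (last xs)"
proof -
  have same: "branch (xs ! i) = branch (xs ! 0)" if "i < length xs" for i
    using that
  proof (induction i)
    case (Suc i)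
    then have "{xs ! i, xs ! Suc i} \<in> E" using assms(1) by (simp add: is_walk_def)
    moreover have "xs ! i \<noteq> root" "xs ! Suc i \<noteq> root"
      using assms(2) Suc.prems nth_mem[of i xs] nth_mem[of "Suc i" xs] by auto
    ultimately show ?case using branch_edge Suc by fastforce
  qed simp
  have "xs \<noteq> []" using assms by (simp add: is_walk_def)
  then show ?thesis using same[of "length xs - 1"] by (simp add: hd_conv_nth last_conv_nth)
qed

text \<open>Vertices in different branches are joined only through the root.\<close>

lemma graph_dist_across_branches:
  assumes u: "u \<in> V" and v: "v \<in> V" and "branch u \<noteq> branch v"
  shows "depth u + depth v \<le> graph_dist V E u v"
proof -
  obtain xs where xs: "is_walk V E xs" "hd xs = u" "last xs = v"
    "length xs = Suc (graph_dist V E u v)"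
    using shortest_walk[OF connected u v] .
  then obtain i where i: "i < length xs" "xs ! i = root"
    using branch_walk assms(3) by (metis in_set_conv_nth)
  have "graph_dist V E u root \<le> length (take (Suc i) xs) - 1"
  proof (rule graph_dist_le[OF is_walk_take[OF xs(1)]])
    show "hd (take (Suc i) xs) = u" using xs by simp
    show "last (take (Suc i) xs) = root" using i by (simp add: take_Suc_conv_app_nth)
  qed simp
  then have "depth u \<le> i" using depth_eq_graph_dist[OF u] i by simp
  moreover have "graph_dist V E root v \<le> length (drop i xs) - 1"
    by (rule graph_dist_le[OF is_walk_drop[OF xs(1) i(1)]]) (use xs i in \<open>auto simp: hd_drop_conv_nth\<close>)
  then have "depth v \<le> length xs - i - 1" by (simp add: depth_def)
  ultimately show ?thesis using xs(4) i by linarith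
qed

lemma branch_depth_3: "depth v = 3 \<Longrightarrow> branch v = parent (parent v)"
  by (simp add: branch_def numeral_eq_Suc)

lemma branch_depth_2: "depth v = 2 \<Longrightarrow> branch v = parent v"
  by (simp add: branch_def numeral_eq_Suc)

lemma diametral_path_depths:
  assumes P: "is_walk V E P" "length P = 6" "graph_dist V E (P ! 0) (P ! 5) = 5"
    and root: "P ! 2 = root"
  shows "depth (P ! 0) = 2" "depth (P ! 1) = 1" "depth (P ! 3) = 1" "depth (P ! 4) = 2"
    "depth (P ! 5) = 3"
proof -
  have V: "P ! i \<in> V" if "i < 6" for i using P that by (auto simp: is_walk_def)
  from P(2) is_walk_edge[OF P(1), of 0] is_walk_edge[OF P(1), of 1] is_walk_edge[OF P(1), of 2]
    is_walk_edge[OF P(1), of 3] is_walk_edge[OF P(1), of 4]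
  have e: "{P!0, P!1} \<in> E" "{P!1, P!2} \<in> E" "{P!2, P!3} \<in> E" "{P!3, P!4} \<in> E"
    "{P!4, P!5} \<in> E" by (simp_all add: numeral_eq_Suc)
  have d2: "depth (P!2) = 0" using root by simp
  have "depth (P!1) \<le> 1" "depth (P!3) \<le> 1"
    using depth_edge_le[of "P!2"] e(2,3) d2 by (simp_all add: insert_commute)
  moreover from this have "depth (P!0) \<le> 2" "depth (P!4) \<le> 2"
    using depth_edge_le e(1,4) by (fastforce simp: insert_commute)+
  moreover from this have "depth (P!5) \<le> 3" using depth_edge_le[OF e(5)] by simp
  moreover have "5 \<le> depth (P!0) + depth (P!5)"
    using graph_dist_triangle[OF connected V[of 0] V[of 2] V[of 5]] P(3) root
      depth_eq_graph_dist[OF V[of 0]] by (simp add: depth_def)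
  ultimately show "depth (P!0) = 2" "depth (P!1) = 1" "depth (P!3) = 1" "depth (P!4) = 2"
    "depth (P!5) = 3"
    using depth_edge_le[OF e(4)] depth_edge_le[OF e(5)] depth_edge_le[of "P!1" "P!0"] e(1)
    by (simp_all add: insert_commute)
qed

lemma diametral_path_nth_1_neq_3:
  assumes P: "is_walk V E P" "length P = 6" "graph_dist V E (P ! 0) (P ! 5) = 5"
  shows "P ! 1 \<noteq> P ! 3"
proof
  assume eq: "P ! 1 = P ! 3"
  have V: "P ! i \<in> V" if "i < 6" for i using P that by (auto simp: is_walk_def)
  have P_eq: "P = [P!0, P!1, P!2, P!3, P!4, P!5]"
    using P(2) by (intro nth_equalityI) (auto simp: numeral_eq_Suc less_Suc_eq)
  have "graph_dist V E (P!0) (P!1) \<le> length (take 2 P) - 1"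
    by (rule graph_dist_le[OF is_walk_take[OF P(1)]]) (simp, (subst (1) P_eq, simp)+)
  moreover have "graph_dist V E (P!3) (P!5) \<le> length (drop 3 P) - 1"
    by (rule graph_dist_le[OF is_walk_drop[OF P(1)]]) (simp add: P(2), (subst (1) P_eq, simp)+)
  ultimately show False
    using graph_dist_triangle[OF connected V[of 0] V[of 1] V[of 5]] eq P(2,3) by simp
qed

lemma diametral_path_root_shape:
  assumes P: "is_walk V E P" "length P = 6" "graph_dist V E (P ! 0) (P ! 5) = 5"
    and root: "P ! 2 = root"
    and diam: "\<forall>x\<in>V. \<forall>y\<in>V. graph_dist V E x y \<le> 5"
  shows "parent (P ! 3) = root" "\<forall>v\<in>V. depth v \<le> 3 \<and> (depth v = 3 \<longrightarrow> parent (parent v) = P ! 3)"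
proof -
  note d = diametral_path_depths[OF P root]
  have V: "P ! i \<in> V" if "i < 6" for i using P that by (auto simp: is_walk_def)
  from P(2) is_walk_edge[OF P(1), of 0] is_walk_edge[OF P(1), of 2]
    is_walk_edge[OF P(1), of 3] is_walk_edge[OF P(1), of 4]
  have e: "{P!0, P!1} \<in> E" "{P!2, P!3} \<in> E" "{P!3, P!4} \<in> E" "{P!4, P!5} \<in> E"
    by (simp_all add: numeral_eq_Suc)
  show "parent (P ! 3) = root" using parent_eqI[OF e(2)] root d by simp
  have "parent (P!0) = P!1" using parent_eqI[of "P!1" "P!0"] e(1) d by (simp add: insert_commute)
  then have branch0: "branch (P!0) = P!1" using branch_depth_2 d by simp
  have "parent (P!5) = P!4" "parent (P!4) = P!3" using parent_eqI e(3,4) d by simp_all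
  then have branch5: "branch (P!5) = P!3" using branch_depth_3 d by simp
  show "\<forall>v\<in>V. depth v \<le> 3 \<and> (depth v = 3 \<longrightarrow> parent (parent v) = P ! 3)"
  proof
    fix v assume v: "v \<in> V"
    have far: "depth v + depth w \<le> 5" if "w \<in> V" "branch v \<noteq> branch w" for w
      using graph_dist_across_branches[OF v that] diam v that(1) by fastforce
    have "branch v = P!3 \<or> depth v \<le> 2" using far[OF V[of 5]] branch5 d by fastforce
    moreover have "branch v = P!3 \<longrightarrow> depth v \<le> 3"
      using far[OF V[of 0]] branch0 d diametral_path_nth_1_neq_3[OF P(1-3)] by fastforce
    ultimately show "depth v \<le> 3 \<and> (depth v = 3 \<longrightarrow> parent (parent v) = P ! 3)"
      using branch_depth_3 by fastforce
  qed
qed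

lemma parent_parent_neq:
  assumes "v \<in> V" "v \<noteq> root" "parent v \<noteq> root" shows "parent (parent v) \<noteq> v"
proof -
  have "depth (parent (parent v)) + 1 = depth (parent v)" "depth (parent v) + 1 = depth v"
    using parent(1,3) assms by blast+
  then show ?thesis by auto
qed

lemma internal_neighbours_eq:
  assumes "r = root \<or> (r \<noteq> root \<and> s = parent r)"
  shows "internal_neighbours V E r s
    = {x \<in> V - {root}. parent x = r \<and> x \<noteq> s \<and> (\<exists>c\<in>V - {root}. parent c = x)}"
proof (intro equalityI subsetI)
  fix x assume "x \<in> internal_neighbours V E r s"
  then obtain c where x: "x \<in> V" "{r, x} \<in> E" "x \<noteq> s" and c: "c \<in> V" "{x, c} \<in> E" "c \<noteq> r"
    unfolding internal_neighbours_def by blast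
  have "x \<noteq> root" "parent x = r" using x(2,3) assms unfolding edge_iff_parent by auto
  moreover have "c \<noteq> root" "parent c = x" using c(2,3) calculation unfolding edge_iff_parent by auto
  ultimately show "x \<in> {x \<in> V - {root}. parent x = r \<and> x \<noteq> s \<and> (\<exists>c\<in>V - {root}. parent c = x)}"
    using x c by blast
next
  fix x assume "x \<in> {x \<in> V - {root}. parent x = r \<and> x \<noteq> s \<and> (\<exists>c\<in>V - {root}. parent c = x)}"
  then obtain c where x: "x \<in> V" "x \<noteq> root" "parent x = r" "x \<noteq> s"
    and c: "c \<in> V" "c \<noteq> root" "parent c = x" by blast
  have "{r, x} \<in> E" "{x, c} \<in> E" using x c unfolding edge_iff_parent by auto
  moreover have "c \<noteq> r" using parent_parent_neq[OF c(1,2)] x c by blast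
  ultimately show "x \<in> internal_neighbours V E r s"
    unfolding internal_neighbours_def using x c by blast
qed

end

subsection \<open>The labelling\<close>

definition rank_in :: "'a set \<Rightarrow> ('a \<Rightarrow> 'b::linorder) \<Rightarrow> 'a \<Rightarrow> nat" where
  "rank_in V key v = card {w\<in>V. key w < key v}"

lemma rank_in_mono: "finite V \<Longrightarrow> key u \<le> key v \<Longrightarrow> rank_in V key u \<le> rank_in V key v"
  unfolding rank_in_def by (intro card_mono) auto

lemma rank_in_strict_mono:
  "finite V \<Longrightarrow> u \<in> V \<Longrightarrow> key u < key v \<Longrightarrow> rank_in V key u < rank_in V key v"
  unfolding rank_in_def by (intro psubset_card_mono) auto

lemma rank_in_less_card: "finite V \<Longrightarrow> v \<in> V \<Longrightarrow> rank_in V key v < card V"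
  unfolding rank_in_def by (intro psubset_card_mono) auto

lemma rank_in_less_imp_key_less:
  "finite V \<Longrightarrow> rank_in V key u < rank_in V key v \<Longrightarrow> key u < key v"
  using rank_in_mono by (metis leD le_less_linear)

lemma inj_on_rank_in:
  assumes "finite V" "inj_on key V" shows "inj_on (rank_in V key) V"
proof (rule inj_onI)
  fix u v assume uv: "u \<in> V" "v \<in> V" "rank_in V key u = rank_in V key v"
  then have "\<not> key u < key v" "\<not> key v < key u"
    using rank_in_strict_mono[OF assms(1)] by (metis less_irrefl)+
  then show "u = v" using assms(2) uv by (meson inj_on_contraD linorder_neqE)
qed

lemma card_odd_numbers: "card {2 * k + 1 | k. k < m} = m"
proof -
  have "{2 * k + 1 | k. k < m} = (\<lambda>k. 2 * k + 1) ` {..<m}" by auto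
  moreover have "inj_on (\<lambda>k::nat. 2 * k + 1) {..<m}" by (auto simp: inj_on_def)
  ultimately show ?thesis by (simp add: card_image)
qed

lemma odd_even_neq: "odd (x::int) \<Longrightarrow> even y \<Longrightarrow> x \<noteq> y"
  by auto

locale depth3_tree =
  fixes V :: "'a set" and root b :: 'a and parent :: "'a \<Rightarrow> 'a" and depth :: "'a \<Rightarrow> nat"
    and tag :: "'a \<Rightarrow> nat"
  assumes finite_V: "finite V" and root_in_V: "root \<in> V" and b_in_V: "b \<in> V"
    and depth_root: "depth root = 0" and depth_b: "depth b = 1"
    and parent: "\<And>v. v \<in> V \<Longrightarrow> v \<noteq> root \<Longrightarrow> parent v \<in> V \<and> depth (parent v) + 1 = depth v"
    and depth_le_3: "\<And>v. v \<in> V \<Longrightarrow> depth v \<le> 3"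
    and depth_3_grandparent: "\<And>v. v \<in> V \<Longrightarrow> depth v = 3 \<Longrightarrow> parent (parent v) = b"
    and inj_tag: "inj_on tag V"
    and inner_count:
      "card {x \<in> V - {root}. parent x = b \<and> x \<noteq> root \<and> (\<exists>c\<in>V - {root}. parent c = x)}
        \<le> card {x \<in> V - {root}. parent x = root \<and> x \<noteq> b \<and> (\<exists>c\<in>V - {root}. parent c = x)} + 1"
begin

lemma depth_eq_0: "v \<in> V \<Longrightarrow> depth v = 0 \<Longrightarrow> v = root"
  using parent by fastforce

lemma b_neq_root: "b \<noteq> root"
  using depth_root depth_b by auto

lemma depth_pos: "v \<in> V \<Longrightarrow> v \<noteq> root \<Longrightarrow> 1 \<le> depth v"
  using depth_eq_0 by fastforce

lemma parent_in_V: "v \<in> V \<Longrightarrow> v \<noteq> root \<Longrightarrow> parent v \<in> V"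
  using parent by blast

lemma parent_depth_1:
  assumes "v \<in> V" "depth v = 1" shows "parent v = root"
proof -
  have "v \<noteq> root" using assms depth_root by auto
  then show ?thesis using parent[OF assms(1)] depth_eq_0 assms(2) by simp
qed

definition has_child :: "'a \<Rightarrow> bool" where "has_child x \<longleftrightarrow> (\<exists>c\<in>V-{root}. parent c = x)"

definition level :: "nat \<Rightarrow> 'a set" where "level k = {v\<in>V. depth v = k}"

definition leaf_children :: "'a set" where
  "leaf_children = {x\<in>V. depth x = 1 \<and> x \<noteq> b \<and> \<not> has_child x}"

definition inner_children :: "'a set" where
  "inner_children = {x\<in>V. depth x = 1 \<and> x \<noteq> b \<and> has_child x}"

definition inner_grandchildren :: "'a set" where
  "inner_grandchildren = {y\<in>V. depth y = 2 \<and> parent y = b \<and> has_child y}"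

lemma inner_children_eq:
  "{x \<in> V - {root}. parent x = root \<and> x \<noteq> b \<and> (\<exists>c\<in>V - {root}. parent c = x)}
    = inner_children"
proof -
  have "x \<in> V - {root} \<and> parent x = root \<longleftrightarrow> x \<in> V \<and> depth x = 1" for x
    using parent[of x] depth_root parent_depth_1[of x] by (auto simp: b_neq_root)
  then show ?thesis unfolding inner_children_def has_child_def by blast
qed

lemma inner_grandchildren_eq:
  "{x \<in> V - {root}. parent x = b \<and> x \<noteq> root \<and> (\<exists>c\<in>V - {root}. parent c = x)}
    = inner_grandchildren"
proof -
  have "x \<in> V - {root} \<and> parent x = b \<longleftrightarrow> x \<in> V \<and> depth x = 2 \<and> parent x = b" for x
    using parent[of x] depth_b depth_root by auto
  then show ?thesis unfolding inner_grandchildren_def has_child_def by blast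
qed

lemma card_inner_grandchildren: "card inner_grandchildren \<le> card inner_children + 1"
  using inner_count unfolding inner_children_eq inner_grandchildren_eq .

lemma finite_sets:
  "finite (level k)" "finite leaf_children" "finite inner_children" "finite inner_grandchildren"
  using finite_V by (auto simp: level_def leaf_children_def inner_children_def inner_grandchildren_def)

lemma level_cases:
  assumes "v \<in> V" shows "v = root \<or> v \<in> level 1 \<or> v \<in> level 2 \<or> v \<in> level 3"
proof -
  have "depth v = 0 \<or> depth v = 1 \<or> depth v = 2 \<or> depth v = 3" using depth_le_3[OF assms] by arith
  then show ?thesis using depth_eq_0[OF assms] assms by (auto simp: level_def)
qed

lemma card_V_levels: "card V = 1 + card (level 1) + card (level 2) + card (level 3)"
proof -
  have eq: "V = insert root (level 1 \<union> level 2 \<union> level 3)"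
    using level_cases root_in_V by (auto simp: level_def)
  have "root \<notin> level 1 \<union> level 2 \<union> level 3" using depth_root by (auto simp: level_def)
  moreover have "level 1 \<inter> level 2 = {}" "(level 1 \<union> level 2) \<inter> level 3 = {}"
    by (auto simp: level_def)
  ultimately have "card (insert root (level 1 \<union> level 2 \<union> level 3))
      = 1 + card (level 1) + card (level 2) + card (level 3)"
    using finite_sets by (simp add: card_Un_disjoint)
  then show ?thesis using eq by simp
qed

lemma card_level_1: "card (level 1) = 1 + card leaf_children + card inner_children"
proof -
  have eq: "level 1 = insert b (leaf_children \<union> inner_children)"
    using b_in_V depth_b by (auto simp: level_def leaf_children_def inner_children_def)
  have "b \<notin> leaf_children \<union> inner_children" "leaf_children \<inter> inner_children = {}"
    by (auto simp: leaf_children_def inner_children_def)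
  then have "card (insert b (leaf_children \<union> inner_children))
      = 1 + card leaf_children + card inner_children"
    using finite_sets by (simp add: card_Un_disjoint)
  then show ?thesis using eq by simp
qed

lemma card_inner_children_le: "card inner_children \<le> card (level 2)"
proof -
  have "inner_children \<subseteq> parent ` level 2"
  proof
    fix x assume "x \<in> inner_children"
    then obtain c where c: "c \<in> V" "c \<noteq> root" "parent c = x" "depth x = 1"
      by (auto simp: inner_children_def has_child_def)
    then have "depth c = 2" using parent[of c] by auto
    then show "x \<in> parent ` level 2" using c by (auto simp: level_def)
  qed
  then have "card inner_children \<le> card (parent ` level 2)"
    using finite_sets by (intro card_mono) auto
  also have "\<dots> \<le> card (level 2)" by (rule card_image_le[OF finite_sets(1)])
  finally show ?thesis .
qed

text \<open>The order in which edge weights are handed out: by depth; at depth 1 the leaves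
  first, then b, then the other internal vertices; at depth 2 grouped by parent in that order,
  internal vertices before leaves within a group; at depth 3 grouped by parent.\<close>

definition block :: "'a \<Rightarrow> nat" where
  "block x = (if x = b then 1 else if has_child x then 2 else 0)"

definition leaf_flag :: "'a \<Rightarrow> nat" where
  "leaf_flag y = (if has_child y then 0 else 1)"

definition order_key :: "'a \<Rightarrow> nat \<times> nat \<times> nat \<times> nat \<times> nat" where
  "order_key v =
    (if depth v = 0 then (0, 0, 0, 0, 0)
     else if depth v = 1 then (1, block v, tag v, 0, 0)
     else if depth v = 2 then (2, block (parent v), tag (parent v), leaf_flag v, tag v)
     else (3, 0, tag (parent v), tag v, 0))"

abbreviation rank :: "'a \<Rightarrow> nat" where "rank \<equiv> rank_in V order_key"

lemma fst_order_key: "v \<in> V \<Longrightarrow> fst (order_key v) = depth v"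
  using depth_le_3[of v] by (auto simp: order_key_def)

lemma order_key_less_depth_le:
  "u \<in> V \<Longrightarrow> v \<in> V \<Longrightarrow> order_key u < order_key v \<Longrightarrow> depth u \<le> depth v"
  using fst_order_key by (metis less_prod_def less_imp_le order_refl)

lemma order_key_root: "order_key root = (0, 0, 0, 0, 0)"
  using depth_root by (simp add: order_key_def)

lemma order_key_level_1: "v \<in> level 1 \<Longrightarrow> order_key v = (1, block v, tag v, 0, 0)"
  by (simp add: order_key_def level_def)

lemma order_key_level_2:
  "v \<in> level 2 \<Longrightarrow> order_key v = (2, block (parent v), tag (parent v), leaf_flag v, tag v)"
  by (simp add: order_key_def level_def)

lemma order_key_level_3: "v \<in> level 3 \<Longrightarrow> order_key v = (3, 0, tag (parent v), tag v, 0)"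
  by (simp add: order_key_def level_def)

lemma inj_on_order_key: "inj_on order_key V"
proof (rule inj_onI)
  fix u v assume uv: "u \<in> V" "v \<in> V" "order_key u = order_key v"
  then have dd: "depth u = depth v" using fst_order_key by metis
  consider "depth u = 0" | "depth u = 1" | "depth u = 2" | "depth u = 3"
    using depth_le_3[OF uv(1)] by linarith
  then show "u = v"
  proof cases
    case 1 then show ?thesis using dd depth_eq_0 uv by auto
  qed (use dd uv inj_tag in \<open>auto simp: order_key_def inj_on_def\<close>)
qed

lemma block_b: "block b = 1"
  by (simp add: block_def)

lemma block_eq_1: "block x = 1 \<Longrightarrow> x = b"
  by (simp add: block_def split: if_splits)

lemma has_child_parent: "v \<in> V \<Longrightarrow> v \<noteq> root \<Longrightarrow> has_child (parent v)"
  unfolding has_child_def by blast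

lemma root_notin_level: "k \<noteq> 0 \<Longrightarrow> root \<notin> level k"
  using depth_root by (simp add: level_def)

lemma disjoint_levels: "j \<noteq> k \<Longrightarrow> level j \<inter> level k = {}"
  by (auto simp: level_def)

lemma card_insert_root_level_1: "card (insert root (level 1)) = card (level 1) + 1"
  using root_notin_level[of 1] finite_sets by simp

lemma rank_level_1: assumes v: "v \<in> level 1" shows "1 \<le> rank v \<and> rank v \<le> card (level 1)"
proof -
  have vV: "v \<in> V" using v by (simp add: level_def)
  have sub: "{u\<in>V. order_key u < order_key v} \<subseteq> insert root (level 1 - {v})"
  proof
    fix u assume u: "u \<in> {u\<in>V. order_key u < order_key v}"
    then have "depth u \<le> 1" "u \<noteq> v" using order_key_less_depth_le[OF _ vV] v by (auto simp: level_def)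
    then show "u \<in> insert root (level 1 - {v})" using u depth_eq_0 by (auto simp: level_def)
  qed
  have "root \<in> {u\<in>V. order_key u < order_key v}"
    using root_in_V order_key_root order_key_level_1[OF v] by simp
  then have "1 \<le> rank v" using finite_V by (auto simp: rank_in_def Suc_le_eq card_gt_0_iff)
  moreover have "rank v \<le> card (insert root (level 1 - {v}))"
    unfolding rank_in_def using sub finite_sets by (intro card_mono) auto
  moreover have "card (insert root (level 1 - {v})) = card (level 1)"
    using finite_sets v root_notin_level[of 1] card_Suc_Diff1 by fastforce
  ultimately show ?thesis by linarith
qed

lemma rank_depth_ge_2: assumes v: "v \<in> V" "2 \<le> depth v" shows "card (level 1) + 1 \<le> rank v"
proof -
  have "insert root (level 1) \<subseteq> {u\<in>V. order_key u < order_key v}"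
  proof
    fix u assume u: "u \<in> insert root (level 1)"
    then have "fst (order_key u) < fst (order_key v)"
      using v fst_order_key root_in_V depth_root by (auto simp: level_def)
    then show "u \<in> {u\<in>V. order_key u < order_key v}"
      using u root_in_V by (auto simp: level_def less_prod_def)
  qed
  then have "card (insert root (level 1)) \<le> rank v"
    unfolding rank_in_def using finite_V by (intro card_mono) auto
  then show ?thesis using card_insert_root_level_1 by simp
qed

lemma rank_level_2: assumes v: "v \<in> level 2" shows "rank v \<le> card (level 1) + card (level 2)"
proof -
  have vV: "v \<in> V" using v by (simp add: level_def)
  have "{u\<in>V. order_key u < order_key v} \<subseteq> insert root (level 1) \<union> (level 2 - {v})"
  proof
    fix u assume u: "u \<in> {u\<in>V. order_key u < order_key v}"
    then have "depth u \<le> 2" "u \<noteq> v" using order_key_less_depth_le[OF _ vV] v by (auto simp: level_def)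
    then show "u \<in> insert root (level 1) \<union> (level 2 - {v})" using u depth_eq_0
      by (cases "depth u = 0"; cases "depth u = 1") (auto simp: level_def)
  qed
  then have "rank v \<le> card (insert root (level 1) \<union> (level 2 - {v}))"
    unfolding rank_in_def using finite_sets by (intro card_mono) auto
  also have "\<dots> \<le> card (insert root (level 1)) + card (level 2 - {v})" by (rule card_Un_le)
  also have "\<dots> = card (level 1) + card (level 2)"
    using card_insert_root_level_1 v finite_sets card_Suc_Diff1 by fastforce
  finally show ?thesis .
qed

lemma rank_level_3: assumes v: "v \<in> level 3" shows "card (level 1) + card (level 2) + 1 \<le> rank v"
proof -
  have "insert root (level 1 \<union> level 2) \<subseteq> {u\<in>V. order_key u < order_key v}"
  proof
    fix u assume u: "u \<in> insert root (level 1 \<union> level 2)"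
    then have "fst (order_key u) < fst (order_key v)"
      using v fst_order_key root_in_V depth_root by (auto simp: level_def)
    then show "u \<in> {u\<in>V. order_key u < order_key v}"
      using u root_in_V by (auto simp: level_def less_prod_def)
  qed
  then have "card (insert root (level 1 \<union> level 2)) \<le> rank v"
    unfolding rank_in_def using finite_V by (intro card_mono) auto
  moreover have "card (insert root (level 1 \<union> level 2)) = card (level 1) + card (level 2) + 1"
    using finite_sets root_notin_level[of 1] root_notin_level[of 2] disjoint_levels[of 1 2]
    by (simp add: card_Un_disjoint)
  ultimately show ?thesis by linarith
qed

lemma order_key_less_b_iff:
  assumes u: "u \<in> V" shows "order_key u < order_key b \<longleftrightarrow> u = root \<or> u \<in> leaf_children"
proof (cases "depth u = 1")
  case True
  have b1: "b \<in> level 1" and u1: "u \<in> level 1" using b_in_V depth_b u True by (auto simp: level_def)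
  have "order_key u < order_key b \<longleftrightarrow> block u < 1 \<or> (block u \<le> 1 \<and> tag u < tag b)"
    using order_key_level_1[OF u1] order_key_level_1[OF b1] block_b by simp
  also have "\<dots> \<longleftrightarrow> block u = 0" using block_eq_1 le_Suc_eq by auto
  also have "\<dots> \<longleftrightarrow> u \<in> leaf_children" using u True by (auto simp: block_def leaf_children_def)
  finally show ?thesis using True depth_root by auto
next
  case False
  then have "depth u = 0 \<or> 2 \<le> depth u" by linarith
  moreover have "fst (order_key u) = depth u" "fst (order_key b) = 1"
    using fst_order_key u b_in_V depth_b by auto
  ultimately show ?thesis using False u depth_eq_0 depth_root
    by (auto simp: less_prod_def leaf_children_def)
qed

lemma rank_b: "rank b = 1 + card leaf_children"
proof -
  have "{u\<in>V. order_key u < order_key b} = insert root leaf_children"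
    using order_key_less_b_iff root_in_V by (auto simp: leaf_children_def)
  moreover have "root \<notin> leaf_children" using depth_root by (simp add: leaf_children_def)
  ultimately show ?thesis unfolding rank_in_def using finite_sets by simp
qed

lemma rank_inner_grandchild:
  assumes y: "y \<in> inner_grandchildren" shows "rank y \<le> card (level 1) + card inner_grandchildren"
proof -
  have yV: "y \<in> V" and dy: "depth y = 2" and y2: "y \<in> level 2"
    using y by (auto simp: inner_grandchildren_def level_def)
  have ky: "order_key y = (2, 1, tag b, 0, tag y)"
    using order_key_level_2[OF y2] y block_b by (simp add: leaf_flag_def inner_grandchildren_def)
  have "{u\<in>V. order_key u < order_key y} \<subseteq> insert root (level 1) \<union> (inner_grandchildren - {y})"
  proof
    fix u assume u: "u \<in> {u\<in>V. order_key u < order_key y}"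
    then have uV: "u \<in> V" and lt: "order_key u < order_key y" by auto
    have "depth u \<le> 2" using order_key_less_depth_le[OF uV yV lt] dy by simp
    show "u \<in> insert root (level 1) \<union> (inner_grandchildren - {y})"
    proof (cases "depth u = 2")
      case False then show ?thesis using \<open>depth u \<le> 2\<close> uV depth_eq_0
        by (cases "depth u = 0") (auto simp: level_def)
    next
      case True
      then have "u \<noteq> root" using depth_root by auto
      then have "block (parent u) \<noteq> 0" using has_child_parent[OF uV] by (simp add: block_def)
      moreover have "(2::nat, block (parent u), tag (parent u), leaf_flag u, tag u)
          < (2, 1, tag b, 0, tag y)"
        using lt order_key_level_2 True uV ky by (simp add: level_def)
      ultimately have "block (parent u) = 1" by simp
      moreover from this have "parent u = b" by (rule block_eq_1)
      ultimately have "block (parent u) = 1" "leaf_flag u = 0" "tag u < tag y"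
        using \<open>(2::nat, _, _, _, _) < _\<close> by auto
      then show ?thesis using uV True block_eq_1
        by (auto simp: inner_grandchildren_def leaf_flag_def split: if_splits)
    qed
  qed
  then have "rank y \<le> card (insert root (level 1) \<union> (inner_grandchildren - {y}))"
    unfolding rank_in_def using finite_sets by (intro card_mono) auto
  also have "\<dots> \<le> card (insert root (level 1)) + card (inner_grandchildren - {y})"
    by (rule card_Un_le)
  also have "\<dots> = card (level 1) + card inner_grandchildren"
    using card_insert_root_level_1 y finite_sets card_Suc_Diff1 by fastforce
  finally show ?thesis .
qed

lemma parent_level_2: assumes "v \<in> level 2" shows "parent v \<in> level 1"
proof -
  have v: "v \<in> V" "depth v = 2" using assms by (auto simp: level_def)
  then have "v \<noteq> root" using depth_root by auto
  then show ?thesis using parent[OF v(1)] v by (simp add: level_def)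
qed


lemma parent_level_3: assumes v: "v \<in> level 3" shows "parent v \<in> inner_grandchildren"
proof -
  have vV: "v \<in> V" and dv: "depth v = 3" using v by (auto simp: level_def)
  have va: "v \<noteq> root" using dv depth_root by auto
  have "parent v \<in> V" "depth (parent v) = 2" using parent[OF vV va] dv by auto
  moreover have "parent (parent v) = b" using depth_3_grandparent vV dv by blast
  moreover have "has_child (parent v)" using has_child_parent vV va by blast
  ultimately show ?thesis by (simp add: inner_grandchildren_def)
qed

lemma inner_grandchild_level_2: "y \<in> inner_grandchildren \<Longrightarrow> y \<in> level 2"
  by (simp add: inner_grandchildren_def level_def)

lemma rank_parent_mono_level_2:
  assumes u: "u \<in> level 2" and v: "v \<in> level 2" and lt: "rank u < rank v"
  shows "rank (parent u) \<le> rank (parent v)"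
proof -
  have "order_key u < order_key v" using rank_in_less_imp_key_less[OF finite_V lt] .
  then have "(2::nat, block (parent u), tag (parent u), leaf_flag u, tag u)
      < (2, block (parent v), tag (parent v), leaf_flag v, tag v)"
    using order_key_level_2 u v by simp
  then have "(1::nat, block (parent u), tag (parent u), 0::nat, 0::nat)
      \<le> (1, block (parent v), tag (parent v), 0, 0)"
    by (auto simp: less_eq_prod_def less_prod_def)
  then have "order_key (parent u) \<le> order_key (parent v)"
    using order_key_level_1 parent_level_2 u v by simp
  then show ?thesis by (rule rank_in_mono[OF finite_V])
qed

lemma rank_parent_mono_level_3:
  assumes u: "u \<in> level 3" and v: "v \<in> level 3" and lt: "rank u < rank v"
  shows "rank (parent u) \<le> rank (parent v)"
proof -
  have "order_key u < order_key v" using rank_in_less_imp_key_less[OF finite_V lt] .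
  then have "(3::nat, 0::nat, tag (parent u), tag u, 0::nat) < (3, 0, tag (parent v), tag v, 0)"
    using order_key_level_3 u v by simp
  then have "tag (parent u) \<le> tag (parent v)" by (auto simp: less_prod_def)
  moreover have "order_key (parent w) = (2, 1, tag b, 0, tag (parent w))" if "w \<in> level 3" for w
    using parent_level_3[OF that] order_key_level_2[OF inner_grandchild_level_2] block_b
    by (auto simp: inner_grandchildren_def leaf_flag_def)
  ultimately have "order_key (parent u) \<le> order_key (parent v)"
    using u v by (auto simp: less_eq_prod_def less_prod_def)
  then show ?thesis by (rule rank_in_mono[OF finite_V])
qed

definition n :: nat where "n = card V - 1"

lemma card_V_eq: "card V = n + 1"
proof -
  have "card V \<noteq> 0" using root_in_V finite_V by auto
  then show ?thesis unfolding n_def by simp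
qed

lemma n_eq_levels: "n = card (level 1) + card (level 2) + card (level 3)"
  unfolding n_def using card_V_levels by simp

text \<open>The edge from v to its parent gets the weight below: the |level 1| largest odd numbers
  below 2n go to the edges at the root, decreasing along the order, and the remaining odd numbers
  to the deeper edges, increasing along the order. The labels alternate in sign down the tree,
  so that each edge realises its weight as a label difference.\<close>

definition weight :: "'a \<Rightarrow> int" where
  "weight v = (if depth v = 1 then 2 * int n + 1 - 2 * int (rank v)
               else 2 * int (rank v) - 2 * int (card (level 1)) - 1)"

definition label :: "'a \<Rightarrow> int" where
  "label v =
    (if depth v = 0 then 0
     else if depth v = 1 then weight v
     else if depth v = 2 then weight (parent v) - weight v
     else weight (parent (parent v)) - weight (parent v) - weight v)"

lemma rank_le_n: "v \<in> V \<Longrightarrow> rank v \<le> n"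
  using rank_in_less_card[OF finite_V, of v order_key] card_V_eq by simp

lemma weight_level_1:
  assumes "v \<in> level 1"
  shows "2 * int n + 1 - 2 * int (card (level 1)) \<le> weight v \<and> weight v \<le> 2 * int n - 1"
  using rank_level_1[OF assms] assms by (auto simp: weight_def level_def)

lemma weight_depth_ge_2:
  assumes "v \<in> V" "2 \<le> depth v"
  shows "1 \<le> weight v \<and> weight v \<le> 2 * int n - 2 * int (card (level 1)) - 1"
  using rank_depth_ge_2[OF assms] rank_le_n[OF assms(1)] assms(2) by (auto simp: weight_def)

lemma weight_level_2: assumes "v \<in> level 2" shows "weight v \<le> 2 * int (card (level 2)) - 1"
  using rank_level_2[OF assms] assms by (auto simp: weight_def level_def)

lemma weight_level_3: assumes "v \<in> level 3" shows "2 * int (card (level 2)) + 1 \<le> weight v"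
  using rank_level_3[OF assms] assms by (auto simp: weight_def level_def)

lemma weight_b: "weight b = 2 * int n - 1 - 2 * int (card leaf_children)"
  using rank_b depth_b by (simp add: weight_def)

lemma weight_inner_grandchild:
  assumes "y \<in> inner_grandchildren" shows "weight y \<le> 2 * int (card inner_grandchildren) - 1"
  using rank_inner_grandchild[OF assms] assms by (auto simp: weight_def inner_grandchildren_def)

lemma odd_weight: "odd (weight v)"
proof (cases "depth v = 1")
  case True
  then have "weight v = 2 * (int n - int (rank v)) + 1" by (simp add: weight_def algebra_simps)
  then show ?thesis by simp
next
  case False
  then have "weight v = 2 * (int (rank v) - int (card (level 1)) - 1) + 1"
    by (simp add: weight_def algebra_simps)
  then show ?thesis by simp
qed

lemma weight_bounds:
  assumes v: "v \<in> V" "v \<noteq> root" shows "1 \<le> weight v \<and> weight v \<le> 2 * int n - 1"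
proof (cases "depth v = 1")
  case True then show ?thesis using weight_level_1[of v] v n_eq_levels by (simp add: level_def)
next
  case False then show ?thesis using weight_depth_ge_2[of v] v depth_pos[OF v] by simp
qed

lemma label_level_1: "v \<in> level 1 \<Longrightarrow> label v = weight v"
  by (simp add: label_def level_def)

lemma label_level_2: "v \<in> level 2 \<Longrightarrow> label v = weight (parent v) - weight v"
  by (simp add: label_def level_def)

lemma label_level_3: "v \<in> level 3 \<Longrightarrow> label v = weight b - weight (parent v) - weight v"
  using depth_3_grandparent by (simp add: label_def level_def)

lemma label_level_1_bounds:
  assumes "v \<in> level 1"
  shows "2 * int n + 1 - 2 * int (card (level 1)) \<le> label v \<and> label v \<le> 2 * int n - 1
    \<and> odd (label v)"
  using weight_level_1[OF assms] label_level_1[OF assms] odd_weight by simp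

lemma label_level_2_bounds:
  assumes v: "v \<in> level 2" shows "2 \<le> label v \<and> label v \<le> 2 * int n - 2 \<and> even (label v)"
proof -
  have "2 * int n + 1 - 2 * int (card (level 1)) \<le> weight (parent v)"
    "weight (parent v) \<le> 2 * int n - 1"
    using weight_level_1[OF parent_level_2[OF v]] by auto
  moreover have "1 \<le> weight v" using weight_depth_ge_2[of v] v by (auto simp: level_def)
  moreover have "even (weight (parent v) - weight v)"
    using odd_weight[of "parent v"] odd_weight[of v] by simp
  ultimately show ?thesis using weight_level_2[OF v] n_eq_levels label_level_2[OF v] by simp
qed

text \<open>The lower bound is where the hypothesis inner_count enters.\<close>

lemma label_level_3_bounds:
  assumes v: "v \<in> level 3"
  shows "1 \<le> label v \<and> label v \<le> 2 * int n - 1 - 2 * int (card (level 1)) \<and> odd (label v)"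
proof -
  have q: "parent v \<in> inner_grandchildren" using parent_level_3[OF v] .
  then have "1 \<le> weight (parent v)" "weight (parent v) \<le> 2 * int (card inner_grandchildren) - 1"
    using weight_depth_ge_2[of "parent v"] weight_inner_grandchild[OF q]
    by (auto simp: inner_grandchildren_def)
  moreover have "2 * int (card (level 2)) + 1 \<le> weight v"
    "weight v \<le> 2 * int n - 2 * int (card (level 1)) - 1"
    using weight_level_3[OF v] weight_depth_ge_2[of v] v by (auto simp: level_def)
  moreover have "odd (weight b - weight (parent v) - weight v)"
    using odd_weight[of b] odd_weight[of "parent v"] odd_weight[of v] by simp
  ultimately show ?thesis
    using weight_b label_level_3[OF v] card_level_1 card_inner_grandchildren
      card_inner_children_le
    by simp
qed

lemma label_root: "label root = 0"
  using depth_root by (simp add: label_def)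

lemma label_pos: assumes "v \<in> V" "v \<noteq> root" shows "1 \<le> label v"
proof -
  have "v \<in> level 1 \<or> v \<in> level 2 \<or> v \<in> level 3" using level_cases[OF assms(1)] assms(2) by blast
  then show ?thesis
  proof (elim disjE)
    assume "v \<in> level 1" then show ?thesis using label_level_1_bounds[of v] n_eq_levels by linarith
  qed (use label_level_2_bounds[of v] label_level_3_bounds[of v] in linarith)+
qed

lemma label_le: assumes "v \<in> V" shows "label v \<le> 2 * int n - 1"
proof -
  have "b \<in> level 1" using b_in_V depth_b by (simp add: level_def)
  then have "card (level 1) \<noteq> 0" using finite_sets by auto
  then have "1 \<le> n" using n_eq_levels by simp
  moreover have "v = root \<or> v \<in> level 1 \<or> v \<in> level 2 \<or> v \<in> level 3" using level_cases[OF assms(1)] by blast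
  ultimately show ?thesis
  proof (elim disjE)
    assume "v = root" then show ?thesis using \<open>1 \<le> n\<close> label_root by simp
  next
    assume "v \<in> level 3" then show ?thesis using label_level_3_bounds[of v] n_eq_levels by linarith
  qed (use label_level_1_bounds[of v] label_level_2_bounds[of v] in linarith)+
qed

lemma label_nonneg: "v \<in> V \<Longrightarrow> 0 \<le> label v"
  using label_pos label_root by (cases "v = root") fastforce+

lemma label_strict_antimono:
  assumes u: "u \<in> level k" and v: "v \<in> level k" and lt: "rank u < rank v"
  shows "label v < label u"
proof -
  have uv: "u \<in> V" "v \<in> V" "depth u = k" "depth v = k" using u v by (auto simp: level_def)
  have weight: "weight u < weight v" if "k \<noteq> 1" using lt uv that by (simp add: weight_def)
  have "u \<noteq> v" using lt by auto
  then have "k \<noteq> 0" using uv depth_eq_0 by metis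
  then consider "k = 1" | "k = 2" | "k = 3" using depth_le_3[OF uv(1)] uv(3) by linarith
  then show ?thesis
  proof cases
    case 1
    then show ?thesis using lt u v label_level_1 by (simp add: weight_def level_def)
  next
    case 2
    then have "rank (parent u) \<le> rank (parent v)" using rank_parent_mono_level_2 u v lt by blast
    then have "weight (parent v) \<le> weight (parent u)"
      using 2 parent_level_2 u v by (auto simp: weight_def level_def)
    then show ?thesis using 2 u v weight label_level_2 by simp
  next
    case 3
    then have "rank (parent u) \<le> rank (parent v)" using rank_parent_mono_level_3 u v lt by blast
    then have "weight (parent u) \<le> weight (parent v)"
      using 3 parent_level_3 u v by (auto simp: weight_def inner_grandchildren_def)
    then show ?thesis using 3 u v weight label_level_3 by simp
  qed
qed

text \<open>Different levels are separated by parity (levels 1 and 3 against level 2) or by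
  magnitude (level 1 against level 3, and the root).\<close>

lemma label_neq_of_depth_less:
  assumes "u \<in> V" "v \<in> V" "depth u < depth v"
  shows "label u \<noteq> label v"
proof -
  have v: "v \<noteq> root" "v \<in> level (depth v)" using assms depth_root by (auto simp: level_def)
  have u: "u \<in> level (depth u)" using assms by (simp add: level_def)
  consider "depth u = 0" | "depth u = 1" "depth v = 2" | "depth u = 1" "depth v = 3"
    | "depth u = 2" "depth v = 3"
    using assms depth_le_3[of v] by linarith
  then show ?thesis
  proof cases
    case 1
    then show ?thesis using label_pos[OF assms(2) v(1)] depth_eq_0 assms(1) label_root by auto
  next
    case 2
    then show ?thesis using label_level_1_bounds u label_level_2_bounds v odd_even_neq by metis
  next
    case 3
    then show ?thesis using label_level_1_bounds[of u] label_level_3_bounds[of v] u v by force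
  next
    case 4
    then show ?thesis using label_level_2_bounds u label_level_3_bounds v odd_even_neq by metis
  qed
qed

lemma inj_on_label: "inj_on label V"
proof (rule inj_onI)
  fix u v assume uv: "u \<in> V" "v \<in> V" "label u = label v"
  show "u = v"
  proof (rule ccontr)
    assume "u \<noteq> v"
    then have "rank u \<noteq> rank v" using inj_on_rank_in[OF finite_V inj_on_order_key] uv by (meson inj_on_def)
    moreover have "depth u = depth v"
      using label_neq_of_depth_less uv by (metis linorder_neqE_nat)
    then have "u \<in> level (depth u)" "v \<in> level (depth u)" using uv by (auto simp: level_def)
    ultimately show False using label_strict_antimono uv(3) by (metis less_irrefl linorder_neqE_nat)
  qed
qed

lemma label_edge_diff: assumes v: "v \<in> V" "v \<noteq> root" shows "\<bar>label v - label (parent v)\<bar> = weight v"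
proof -
  have "1 \<le> weight v" using weight_bounds[OF v] by simp
  moreover have "v \<in> level 1 \<or> v \<in> level 2 \<or> v \<in> level 3" using level_cases[OF v(1)] v(2) by blast
  moreover have "v \<in> level 1 \<Longrightarrow> parent v = root" using parent_depth_1 v by (simp add: level_def)
  moreover have "v \<in> level 3 \<Longrightarrow> parent (parent v) = b" using depth_3_grandparent by (simp add: level_def)
  ultimately show ?thesis
    using label_root label_level_1 label_level_2 label_level_3 parent_level_2 parent_level_3
      inner_grandchild_level_2
    by auto
qed

lemma inj_on_weight: "inj_on weight (V - {root})"
proof (rule inj_onI)
  fix u v assume uv: "u \<in> V - {root}" "v \<in> V - {root}" "weight u = weight v"
  have "rank u = rank v"
  proof (cases "depth u = 1"; cases "depth v = 1")
    assume "depth u = 1" "depth v \<noteq> 1"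
    then show ?thesis using weight_level_1[of u] weight_depth_ge_2[of v] depth_pos[of v] uv
      by (force simp: level_def)
  next
    assume "depth u \<noteq> 1" "depth v = 1"
    then show ?thesis using weight_level_1[of v] weight_depth_ge_2[of u] depth_pos[of u] uv
      by (force simp: level_def)
  qed (use uv in \<open>simp_all add: weight_def\<close>)
  then show "u = v" using inj_on_rank_in[OF finite_V inj_on_order_key] uv by (meson DiffD1 inj_on_def)
qed

lemma weight_image: "(\<lambda>v. nat (weight v)) ` (V - {root}) = {2 * k + 1 | k. k < n}"
proof (rule card_subset_eq)
  show "finite {2 * k + 1 | k. k < n}" by simp
  show "(\<lambda>v. nat (weight v)) ` (V - {root}) \<subseteq> {2 * k + 1 | k. k < n}"
  proof
    fix x assume "x \<in> (\<lambda>v. nat (weight v)) ` (V - {root})"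
    then obtain v where v: "v \<in> V" "v \<noteq> root" "x = nat (weight v)" by auto
    obtain k where k: "weight v = 2 * k + 1" using odd_weight[of v] by (metis oddE)
    then have "0 \<le> k" "k < int n" using weight_bounds[OF v(1,2)] by auto
    then have "x = 2 * nat k + 1" "nat k < n" using v(3) k by auto
    then show "x \<in> {2 * k + 1 | k. k < n}" by blast
  qed
  have "inj_on (\<lambda>v. nat (weight v)) (V - {root})"
  proof (rule inj_onI)
    fix u v assume uv: "u \<in> V - {root}" "v \<in> V - {root}" "nat (weight u) = nat (weight v)"
    moreover have "1 \<le> weight u" "1 \<le> weight v" using weight_bounds uv by auto
    ultimately show "u = v" using inj_on_weight by (simp add: inj_on_def)
  qed
  then have "card ((\<lambda>v. nat (weight v)) ` (V - {root})) = card (V - {root})" by (rule card_image)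
  also have "\<dots> = n" using finite_V root_in_V card_V_eq by simp
  finally show "card ((\<lambda>v. nat (weight v)) ` (V - {root})) = card {2 * k + 1 | k. k < n}"
    using card_odd_numbers by simp
qed

definition parent_edges :: "'a set set" where
  "parent_edges = (\<lambda>v. {v, parent v}) ` (V - {root})"

lemma card_parent_edges: "card parent_edges = n"
proof -
  have "inj_on (\<lambda>v. {v, parent v}) (V - {root})"
  proof (rule inj_onI)
    fix u v assume uv: "u \<in> V - {root}" "v \<in> V - {root}" "{u, parent u} = {v, parent v}"
    have "depth (parent u) + 1 = depth u" "depth (parent v) + 1 = depth v"
      using parent uv(1,2) by blast+
    then show "u = v" using uv(3) by (auto simp: doubleton_eq_iff)
  qed
  then show ?thesis
    unfolding parent_edges_def using card_image finite_V root_in_V card_V_eq by fastforce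
qed

lemma parent_edge_differences:
  "{nat \<bar>label x - label y\<bar> | x y. {x, y} \<in> parent_edges} = (\<lambda>v. nat (weight v)) ` (V - {root})"
proof (intro equalityI subsetI)
  fix w assume "w \<in> {nat \<bar>label x - label y\<bar> | x y. {x, y} \<in> parent_edges}"
  then obtain x y v where "w = nat \<bar>label x - label y\<bar>" "v \<in> V" "v \<noteq> root"
    "{x, y} = {v, parent v}"
    unfolding parent_edges_def by blast
  then show "w \<in> (\<lambda>v. nat (weight v)) ` (V - {root})"
    using label_edge_diff[of v] by (auto simp: doubleton_eq_iff abs_minus_commute)
next
  fix w assume "w \<in> (\<lambda>v. nat (weight v)) ` (V - {root})"
  then obtain v where v: "v \<in> V" "v \<noteq> root" "w = nat \<bar>label v - label (parent v)\<bar>"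
    using label_edge_diff by auto
  moreover have "{v, parent v} \<in> parent_edges" using v unfolding parent_edges_def by blast
  ultimately show "w \<in> {nat \<bar>label x - label y\<bar> | x y. {x, y} \<in> parent_edges}" by blast
qed

theorem odd_graceful_parent_edges: "odd_graceful V parent_edges"
  unfolding odd_graceful_def
proof (intro exI conjI)
  define f where "f v = nat (label v)" for v
  have f: "int (f v) = label v" if "v \<in> V" for v using label_nonneg[OF that] by (simp add: f_def)
  show "inj_on f V" using inj_on_label f by (metis inj_on_def)
  show "f ` V \<subseteq> {0 ..< 2 * card parent_edges}"
    using label_le f card_parent_edges by fastforce
  have "x \<in> V \<and> y \<in> V" if e: "{x, y} \<in> parent_edges" for x y
  proof -
    obtain v where "v \<in> V" "v \<noteq> root" "{x, y} = {v, parent v}"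
      using e unfolding parent_edges_def by blast
    then have "{x, y} \<subseteq> V" using parent_in_V by simp
    then show ?thesis by simp
  qed
  then have "nat \<bar>int (f x) - int (f y)\<bar> = nat \<bar>label x - label y\<bar>"
    if "{x, y} \<in> parent_edges" for x y
    using f that by simp
  then have "{nat \<bar>int (f x) - int (f y)\<bar> | x y. {x, y} \<in> parent_edges}
      = {nat \<bar>label x - label y\<bar> | x y. {x, y} \<in> parent_edges}"
    by (intro Collect_cong) (metis (no_types, lifting))
  then show "{nat \<bar>int (f x) - int (f y)\<bar> | x y. {x, y} \<in> parent_edges}
      = {2 * k + 1 | k. k < card parent_edges}"
    using parent_edge_differences weight_image card_parent_edges by simp
qed

end

context rooted_tree
begin

lemma odd_graceful_of_diametral_path:
  assumes P: "is_walk V E P" "length P = 6" "graph_dist V E (P ! 0) (P ! 5) = 5"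
    and root: "P ! 2 = root"
    and diam: "\<forall>x\<in>V. \<forall>y\<in>V. graph_dist V E x y \<le> 5"
    and count: "card (internal_neighbours V E (P ! 3) root)
      \<le> card (internal_neighbours V E root (P ! 3)) + 1"
  shows "odd_graceful V E"
proof -
  define b where "b = P ! 3"
  have b: "b \<in> V" "depth b = 1" "parent b = root"
    using diametral_path_depths[OF P root] diametral_path_root_shape[OF P root diam] P
    by (auto simp: b_def is_walk_def)
  have shape: "v \<in> V \<Longrightarrow> depth v \<le> 3" "v \<in> V \<Longrightarrow> depth v = 3 \<Longrightarrow> parent (parent v) = b" for v
    using diametral_path_root_shape(2)[OF P root diam] by (auto simp: b_def)
  have "b \<noteq> root" using b by auto
  then have count': "card {x \<in> V - {root}. parent x = b \<and> x \<noteq> root \<and> (\<exists>c\<in>V - {root}. parent c = x)}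
      \<le> card {x \<in> V - {root}. parent x = root \<and> x \<noteq> b \<and> (\<exists>c\<in>V - {root}. parent c = x)} + 1"
    using count internal_neighbours_eq[of b root] internal_neighbours_eq[of root b] b(3)
    by (simp add: b_def)
  obtain tag :: "'a \<Rightarrow> nat" where "inj_on tag V"
    using finite_imp_inj_to_nat_seg[OF finite_V] by blast
  then interpret depth3_tree V root b parent depth tag
    using finite_V root_in_V b parent shape count' by unfold_locales simp_all
  show ?thesis using odd_graceful_parent_edges edges_eq by (simp add: parent_edges_def)
qed

end

theorem theorem4:
  fixes V :: "'a set" and E :: "'a set set"
  assumes "is_tree V E" and "diameter V E = 5"
  shows "odd_graceful V E"
proof -
  have connected: "connected_graph V E" and finite: "finite V"
    using assms(1) by (auto simp: is_tree_def simple_graph_def)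
  obtain P where P: "is_walk V E P" "length P = 6" "graph_dist V E (P ! 0) (P ! 5) = 5"
    using diametral_path[OF connected finite] assms(2) by auto
  have diam: "\<forall>x\<in>V. \<forall>y\<in>V. graph_dist V E x y \<le> 5"
    using graph_dist_le_diameter[OF finite] assms(2) by metis
  have in_V: "P ! i \<in> V" if "i < 6" for i using P that by (auto simp: is_walk_def)
  interpret at2: rooted_tree V E "P ! 2" using assms(1) in_V by unfold_locales auto
  interpret at3: rooted_tree V E "P ! 3" using assms(1) in_V by unfold_locales auto
  let ?N = "internal_neighbours V E"
  consider "card (?N (P ! 3) (P ! 2)) \<le> card (?N (P ! 2) (P ! 3)) + 1"
    | "card (?N (P ! 2) (P ! 3)) \<le> card (?N (P ! 3) (P ! 2)) + 1"
    by linarith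
  then show ?thesis
  proof cases
    case 1
    then show ?thesis using at2.odd_graceful_of_diametral_path P diam by simp
  next
    case 2
    have "rev P ! 0 = P ! 5" "rev P ! 5 = P ! 0" "rev P ! 2 = P ! 3" "rev P ! 3 = P ! 2"
      using P(2) by (simp_all add: rev_nth)
    then show ?thesis
      using at3.odd_graceful_of_diametral_path[of "rev P"] is_walk_rev[OF P(1)] P 2 diam
        graph_dist_commute[OF connected in_V[of 0] in_V[of 5]] by simp
  qed
qed

end
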